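(* Let $G$ be a finitely generated group which is not nilpotent. Then there exists $a\in G$ such that the normal subgroup of $G$ generated by $a$ is not nilpotent. *)

theory Defs
  imports "HOL-Algebra.Algebra"
begin

definition commutator_subgroup :: "('a, 'b) monoid_scheme \<Rightarrow> 'a set \<Rightarrow> 'a set \<Rightarrow> 'a set" where
  "commutator_subgroup G A B =
     generate G {a \<otimes>\<^bsub>G\<^esub> b \<otimes>\<^bsub>G\<^esub> inv\<^bsub>G\<^esub> a \<otimes>\<^bsub>G\<^esub> inv\<^bsub>G\<^esub> b | a b. a \<in> A \<and> b \<in> B}"

fun lower_central :: "('a, 'b) monoid_scheme \<Rightarrow> nat \<Rightarrow> 'a set" where
  "lower_central G 0 = carrier G"
| "lower_central G (Suc n) = commutator_subgroup G (carrier G) (lower_central G n)"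

definition nilpotent_group :: "('a, 'b) monoid_scheme \<Rightarrow> bool" where
  "nilpotent_group G \<longleftrightarrow> group G \<and> (\<exists>n. lower_central G n = {\<one>\<^bsub>G\<^esub>})"

definition finitely_generated_group :: "('a, 'b) monoid_scheme \<Rightarrow> bool" where
  "finitely_generated_group G \<longleftrightarrow>
     (\<exists>S. finite S \<and> S \<subseteq> carrier G \<and> generate G S = carrier G)"

definition normal_closure :: "('a, 'b) monoid_scheme \<Rightarrow> 'a \<Rightarrow> 'a set" where
  "normal_closure G a = generate G {g \<otimes>\<^bsub>G\<^esub> a \<otimes>\<^bsub>G\<^esub> inv\<^bsub>G\<^esub> g | g. g \<in> carrier G}"

end

theory Submission
  imports Defs
begin

text \<open>
  Suppose every normal closure \<open>\<langle>a\<rangle>\<^sup>G\<close> is nilpotent and \<open>S\<close> is a finite generating set.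
  Then \<open>G\<close> is generated by the finitely many normal nilpotent subgroups \<open>\<langle>s\<rangle>\<^sup>G\<close>, \<open>s \<in> S\<close>,
  so \<open>G\<close> is nilpotent by Fitting's theorem: if \<open>M\<close> and \<open>N\<close> are normal with
  \<open>\<gamma>\<^sub>c(M) = \<gamma>\<^sub>d(N) = 1\<close>, then \<open>\<gamma>\<^sub>c\<^sub>+\<^sub>d(MN) = 1\<close>, where the lower central series of a
  subgroup is formed with commutators taken in \<open>G\<close>.

  For Fitting's theorem, say that an element has weight at least \<open>i + 1\<close> in \<open>M\<close> if it lies in
  \<open>\<gamma>\<^sub>i(M)\<close> (every element has weight at least \<open>0\<close>), and likewise for \<open>N\<close>. A commutator
  with an element of \<open>M \<union> N\<close> raises the total weight by one, and since the elements of total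
  weight at least \<open>k\<close> generate a normal subgroup, \<open>\<gamma>\<^sub>k(MN)\<close> lies in the subgroup generated by
  the elements of total weight at least \<open>k + 1\<close>. An element of total weight \<open>c + d + 1\<close> has
  weight above \<open>c\<close> in \<open>M\<close> or above \<open>d\<close> in \<open>N\<close>, hence is trivial.
\<close>

section \<open>Commutators\<close>

definition commutator :: "('a, 'b) monoid_scheme \<Rightarrow> 'a \<Rightarrow> 'a \<Rightarrow> 'a" where
  "commutator G x y = x \<otimes>\<^bsub>G\<^esub> y \<otimes>\<^bsub>G\<^esub> inv\<^bsub>G\<^esub> x \<otimes>\<^bsub>G\<^esub> inv\<^bsub>G\<^esub> y"

lemma commutator_subgroup_eq:
  "commutator_subgroup G A B = generate G {commutator G a b | a b. a \<in> A \<and> b \<in> B}"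
  unfolding commutator_subgroup_def commutator_def by simp

lemma normal_subset_carrier: "H \<lhd> G \<Longrightarrow> H \<subseteq> carrier G"
  using normal_imp_subgroup subgroup.subset by blast

context group
begin

lemma inv_m_cancel_left: "x \<in> carrier G \<Longrightarrow> z \<in> carrier G \<Longrightarrow> inv x \<otimes> (x \<otimes> z) = z"
  by (simp add: m_assoc[symmetric])

lemma m_inv_cancel_left: "x \<in> carrier G \<Longrightarrow> z \<in> carrier G \<Longrightarrow> x \<otimes> (inv x \<otimes> z) = z"
  by (simp add: m_assoc[symmetric])

lemmas group_normalize = m_assoc inv_mult_group inv_m_cancel_left m_inv_cancel_left

lemma commutator_closed [simp]:
  "x \<in> carrier G \<Longrightarrow> y \<in> carrier G \<Longrightarrow> commutator G x y \<in> carrier G"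
  by (simp add: commutator_def)

lemma inv_commutator:
  "x \<in> carrier G \<Longrightarrow> y \<in> carrier G \<Longrightarrow> inv (commutator G x y) = commutator G y x"
  by (simp add: commutator_def group_normalize)

lemma commutator_one_left [simp]: "y \<in> carrier G \<Longrightarrow> commutator G \<one> y = \<one>"
  by (simp add: commutator_def)

lemma commutator_mult_left:
  "\<lbrakk>x1 \<in> carrier G; x2 \<in> carrier G; y \<in> carrier G\<rbrakk> \<Longrightarrow>
    commutator G (x1 \<otimes> x2) y = x1 \<otimes> commutator G x2 y \<otimes> inv x1 \<otimes> commutator G x1 y"
  by (simp add: commutator_def group_normalize)

lemma commutator_inv_left:
  "\<lbrakk>x \<in> carrier G; y \<in> carrier G\<rbrakk> \<Longrightarrow>
    commutator G (inv x) y = inv x \<otimes> inv (commutator G x y) \<otimes> x"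
  by (simp add: commutator_def group_normalize)

lemma conj_commutator:
  "\<lbrakk>g \<in> carrier G; x \<in> carrier G; y \<in> carrier G\<rbrakk> \<Longrightarrow>
    g \<otimes> commutator G x y \<otimes> inv g = commutator G (g \<otimes> x \<otimes> inv g) (g \<otimes> y \<otimes> inv g)"
  by (simp add: commutator_def group_normalize)

lemma commutator_mem_normal_right:
  assumes "W \<lhd> G" "x \<in> carrier G" "y \<in> W"
  shows "commutator G x y \<in> W"
proof -
  have sub: "subgroup W G" using normal_imp_subgroup[OF assms(1)] .
  have "x \<otimes> y \<otimes> inv x \<in> W" using normal_invE(2)[OF assms] .
  moreover have "inv y \<in> W" using subgroup.m_inv_closed[OF sub assms(3)] .
  ultimately show ?thesis
    unfolding commutator_def by (rule subgroup.m_closed[OF sub])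
qed

lemma commutator_swap_mem_normal:
  assumes "W \<lhd> G" "x \<in> carrier G" "y \<in> carrier G" "commutator G x y \<in> W"
  shows "commutator G y x \<in> W"
  using subgroup.m_inv_closed[OF normal_imp_subgroup[OF assms(1)] assms(4)] assms(2,3)
  by (simp add: inv_commutator)

lemma commutator_mem_normal_left:
  assumes "W \<lhd> G" "x \<in> W" "y \<in> carrier G"
  shows "commutator G x y \<in> W"
  using commutator_swap_mem_normal[OF assms(1,3) _ commutator_mem_normal_right[OF assms(1,3,2)]]
    normal_subset_carrier[OF assms(1)] assms(2) by blast

text \<open>By \<open>commutator_mult_left\<close> and \<open>commutator_inv_left\<close>, the \<open>x\<close> with
  \<open>commutator G x y \<in> W\<close> form a subgroup when \<open>W\<close> is normal.\<close>
lemma commutator_generate_left: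
  assumes W: "W \<lhd> G" and Y: "Y \<subseteq> carrier G" and y: "y \<in> carrier G"
    and gens: "\<And>x. x \<in> Y \<Longrightarrow> commutator G x y \<in> W" and x: "x \<in> generate G Y"
  shows "commutator G x y \<in> W"
  using x
proof induction
  case one
  show ?case using y subgroup.one_closed[OF normal_imp_subgroup[OF W]] by simp
next
  case (incl x)
  then show ?case by (rule gens)
next
  case (inv x)
  have xc: "x \<in> carrier G" using inv Y by blast
  have "inv (commutator G x y) \<in> W"
    using subgroup.m_inv_closed[OF normal_imp_subgroup[OF W] gens[OF inv]] .
  then have "inv x \<otimes> inv (commutator G x y) \<otimes> inv (inv x) \<in> W"
    using normal_invE(2)[OF W] xc by blast
  then show ?case using xc y by (simp add: commutator_inv_left)
next
  case (eng x1 x2)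
  have xc: "x1 \<in> carrier G" "x2 \<in> carrier G"
    using eng(1,2) generate_in_carrier[OF Y] by auto
  have "x1 \<otimes> commutator G x2 y \<otimes> inv x1 \<in> W"
    using normal_invE(2)[OF W xc(1) eng(4)] .
  then have "x1 \<otimes> commutator G x2 y \<otimes> inv x1 \<otimes> commutator G x1 y \<in> W"
    using subgroup.m_closed[OF normal_imp_subgroup[OF W] _ eng(3)] by blast
  then show ?case
    by (simp only: commutator_mult_left[OF xc y])
qed

lemma commutator_generate_right:
  assumes W: "W \<lhd> G" and Y: "Y \<subseteq> carrier G" and x: "x \<in> carrier G"
    and gens: "\<And>y. y \<in> Y \<Longrightarrow> commutator G x y \<in> W" and y: "y \<in> generate G Y"
  shows "commutator G x y \<in> W"
proof -
  have "commutator G y x \<in> W"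
  proof (rule commutator_generate_left[OF W Y x _ y])
    show "commutator G y' x \<in> W" if "y' \<in> Y" for y'
      using commutator_swap_mem_normal[OF W x _ gens[OF that]] that Y by blast
  qed
  then show ?thesis
    by (rule commutator_swap_mem_normal[OF W generate_in_carrier[OF Y y] x])
qed

lemma normal_generate_Union:
  assumes normal: "\<And>H. H \<in> \<H> \<Longrightarrow> H \<lhd> G"
  shows "generate G (\<Union>\<H>) \<lhd> G"
proof (rule normal_generateI)
  show "\<Union>\<H> \<subseteq> carrier G"
    using normal_subset_carrier[OF normal] by blast
next
  fix h g assume "h \<in> \<Union>\<H>" and g: "g \<in> carrier G"
  then obtain H where "H \<in> \<H>" "h \<in> H" by blast
  then show "g \<otimes> h \<otimes> inv g \<in> \<Union>\<H>"
    using normal_invE(2)[OF normal g] by blast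
qed

lemma commutator_subgroup_normal:
  assumes A: "A \<lhd> G" and B: "B \<lhd> G"
  shows "commutator_subgroup G A B \<lhd> G"
  unfolding commutator_subgroup_eq
proof (rule normal_generateI)
  have "A \<subseteq> carrier G" "B \<subseteq> carrier G"
    using normal_subset_carrier[OF A] normal_subset_carrier[OF B] .
  then show gens: "{commutator G a b |a b. a \<in> A \<and> b \<in> B} \<subseteq> carrier G"
    by (blast intro: commutator_closed)
  fix h g
  assume "h \<in> {commutator G a b |a b. a \<in> A \<and> b \<in> B}" and g: "g \<in> carrier G"
  then obtain a b where ab: "a \<in> A" "b \<in> B" and h: "h = commutator G a b"
    by blast
  have "g \<otimes> h \<otimes> inv g = commutator G (g \<otimes> a \<otimes> inv g) (g \<otimes> b \<otimes> inv g)"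
    using conj_commutator g ab \<open>A \<subseteq> carrier G\<close> \<open>B \<subseteq> carrier G\<close> h by blast
  moreover have "g \<otimes> a \<otimes> inv g \<in> A" "g \<otimes> b \<otimes> inv g \<in> B"
    using normal_invE(2)[OF A g ab(1)] normal_invE(2)[OF B g ab(2)] .
  ultimately show "g \<otimes> h \<otimes> inv g \<in> {commutator G a b |a b. a \<in> A \<and> b \<in> B}"
    by blast
qed

lemma commutator_subgroup_subset_right:
  assumes "A \<subseteq> carrier G" "B \<lhd> G"
  shows "commutator_subgroup G A B \<subseteq> B"
  unfolding commutator_subgroup_eq
proof (rule generate_subgroup_incl)
  show "{commutator G a b |a b. a \<in> A \<and> b \<in> B} \<subseteq> B"
    using assms commutator_mem_normal_right by blast
qed (rule normal_imp_subgroup[OF assms(2)])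

lemma commutator_mem_subgroup:
  assumes H: "subgroup H G" and "a \<in> H" "b \<in> H"
  shows "commutator G a b \<in> H"
  unfolding commutator_def
  using assms by (intro subgroup.m_closed[OF H] subgroup.m_inv_closed[OF H])

lemma commutator_subgroup_subset:
  assumes H: "subgroup H G" and "A \<subseteq> H" "B \<subseteq> H"
  shows "commutator_subgroup G A B \<subseteq> H"
  unfolding commutator_subgroup_eq
proof (rule generate_subgroup_incl[OF _ H])
  show "{commutator G a b |a b. a \<in> A \<and> b \<in> B} \<subseteq> H"
    using assms commutator_mem_subgroup by blast
qed

lemma commutator_subgroup_consistent:
  assumes H: "subgroup H G" and "A \<subseteq> H" "B \<subseteq> H"
  shows "commutator_subgroup (G\<lparr>carrier := H\<rparr>) A B = commutator_subgroup G A B"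
proof -
  have inv_H: "inv\<^bsub>G\<lparr>carrier := H\<rparr>\<^esub> x = inv x" if "x \<in> A \<union> B" for x
    using m_inv_consistent[OF H] that assms(2,3) by blast
  have "{a \<otimes> b \<otimes> inv\<^bsub>G\<lparr>carrier := H\<rparr>\<^esub> a \<otimes> inv\<^bsub>G\<lparr>carrier := H\<rparr>\<^esub> b |a b. a \<in> A \<and> b \<in> B}
      = {commutator G a b |a b. a \<in> A \<and> b \<in> B}"
    by (force simp: commutator_def inv_H)
  moreover have "{commutator G a b |a b. a \<in> A \<and> b \<in> B} \<subseteq> H"
    using assms commutator_mem_subgroup by blast
  ultimately show ?thesis
    unfolding commutator_subgroup_def[of "G\<lparr>carrier := H\<rparr>"] commutator_subgroup_eq[of G]
    using generate_consistent[OF _ H] by simp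
qed

end

section \<open>The lower central series of a subgroup\<close>

fun lower_central_of :: "('a, 'b) monoid_scheme \<Rightarrow> 'a set \<Rightarrow> nat \<Rightarrow> 'a set" where
  "lower_central_of G H 0 = H"
| "lower_central_of G H (Suc n) = commutator_subgroup G H (lower_central_of G H n)"

lemma commutator_mem_lower_central_of_Suc:
  "x \<in> H \<Longrightarrow> y \<in> lower_central_of G H n \<Longrightarrow> commutator G x y \<in> lower_central_of G H (Suc n)"
  by (auto simp: commutator_subgroup_eq intro: generate.incl)

context group
begin

lemma lower_central_of_normal: "H \<lhd> G \<Longrightarrow> lower_central_of G H n \<lhd> G"
  by (induction n) (simp_all add: commutator_subgroup_normal)

lemma lower_central_of_subset:
  assumes "subgroup H G" shows "lower_central_of G H n \<subseteq> H"
  by (induction n) (simp_all add: commutator_subgroup_subset[OF assms])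

lemma lower_central_of_antimono:
  assumes H: "H \<lhd> G" and "m \<le> n"
  shows "lower_central_of G H n \<subseteq> lower_central_of G H m"
proof (rule lift_Suc_antimono_le[of "lower_central_of G H", OF _ \<open>m \<le> n\<close>])
  show "lower_central_of G H (Suc k) \<subseteq> lower_central_of G H k" for k
    using commutator_subgroup_subset_right[OF normal_subset_carrier[OF H]
        lower_central_of_normal[OF H]] by simp
qed

lemma lower_central_subgroup:
  assumes H: "subgroup H G"
  shows "lower_central (G\<lparr>carrier := H\<rparr>) n = lower_central_of G H n"
proof (induction n)
  case (Suc n)
  then show ?case
    using commutator_subgroup_consistent[OF H _ lower_central_of_subset[OF H]] by simp
qed simp

lemma nilpotent_group_subgroup_iff:
  assumes "subgroup H G"
  shows "nilpotent_group (G\<lparr>carrier := H\<rparr>) \<longleftrightarrow> (\<exists>n. lower_central_of G H n = {\<one>})"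
  using subgroup_imp_group[OF assms] lower_central_subgroup[OF assms]
  by (simp add: nilpotent_group_def)

end

section \<open>Fitting's theorem\<close>

fun lower_central_filtration :: "('a, 'b) monoid_scheme \<Rightarrow> 'a set \<Rightarrow> nat \<Rightarrow> 'a set" where
  "lower_central_filtration G H 0 = carrier G"
| "lower_central_filtration G H (Suc n) = lower_central_of G H n"

text \<open>\<open>lower_central_filtration G H i\<close> is the set of elements of weight at least \<open>i\<close> in \<open>H\<close>,
  and \<open>mixed_weight_set G M N k\<close> the set of elements of total weight at least \<open>k\<close>.\<close>

definition mixed_weight_set :: "('a, 'b) monoid_scheme \<Rightarrow> 'a set \<Rightarrow> 'a set \<Rightarrow> nat \<Rightarrow> 'a set" where
  "mixed_weight_set G M N k =
     (\<Union>i\<le>k. lower_central_filtration G M i \<inter> lower_central_filtration G N (k - i))"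

context group
begin

lemma lower_central_filtration_normal: "H \<lhd> G \<Longrightarrow> lower_central_filtration G H i \<lhd> G"
  by (cases i) (simp_all add: normal_self lower_central_of_normal)

lemma commutator_mem_lower_central_filtration_Suc:
  assumes H: "H \<lhd> G" and "x \<in> H" "y \<in> lower_central_filtration G H i"
  shows "commutator G x y \<in> lower_central_filtration G H (Suc i)"
proof (cases i)
  case 0
  then show ?thesis using commutator_mem_normal_left[OF H] assms by simp
next
  case (Suc n)
  then show ?thesis using commutator_mem_lower_central_of_Suc assms by simp
qed

lemma lower_central_filtration_trivial:
  assumes H: "H \<lhd> G" and c: "lower_central_of G H c = {\<one>}" and "c < i"
  shows "lower_central_filtration G H i \<subseteq> {\<one>}"
proof -
  obtain j where "i = Suc j" "c \<le> j" using \<open>c < i\<close> by (cases i) auto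
  then show ?thesis using lower_central_of_antimono[OF H \<open>c \<le> j\<close>] c by simp
qed

lemma mixed_weight_set_generate_normal:
  assumes "M \<lhd> G" "N \<lhd> G"
  shows "generate G (mixed_weight_set G M N k) \<lhd> G"
  unfolding mixed_weight_set_def
  using assms by (intro normal_generate_Union)
    (auto intro: normal_subgroup_intersect lower_central_filtration_normal)

lemma mixed_weight_set_subset: "M \<lhd> G \<Longrightarrow> mixed_weight_set G M N k \<subseteq> carrier G"
  unfolding mixed_weight_set_def
  using normal_subset_carrier[OF lower_central_filtration_normal] by blast

lemma commutator_mem_mixed_weight_set:
  assumes M: "M \<lhd> G" and N: "N \<lhd> G"
    and x: "x \<in> M \<union> N" and y: "y \<in> mixed_weight_set G M N k"
  shows "commutator G x y \<in> mixed_weight_set G M N (Suc k)"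
proof -
  let ?FM = "lower_central_filtration G M" and ?FN = "lower_central_filtration G N"
  obtain i where i: "i \<le> k" "y \<in> ?FM i" "y \<in> ?FN (k - i)"
    using y unfolding mixed_weight_set_def by blast
  have xc: "x \<in> carrier G"
    using x normal_subset_carrier[OF M] normal_subset_carrier[OF N] by blast
  show ?thesis
  proof (cases "x \<in> M")
    case True
    have "commutator G x y \<in> ?FM (Suc i) \<inter> ?FN (Suc k - Suc i)"
      using commutator_mem_lower_central_filtration_Suc[OF M True i(2)]
        commutator_mem_normal_right[OF lower_central_filtration_normal[OF N] xc i(3)] by simp
    then show ?thesis unfolding mixed_weight_set_def using i(1) by blast
  next
    case False
    then have "x \<in> N" using x by blast
    have "Suc k - i = Suc (k - i)" using i(1) by simp
    then have "commutator G x y \<in> ?FM i \<inter> ?FN (Suc k - i)"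
      using commutator_mem_lower_central_filtration_Suc[OF N \<open>x \<in> N\<close> i(3)]
        commutator_mem_normal_right[OF lower_central_filtration_normal[OF M] xc i(2)] by simp
    then show ?thesis unfolding mixed_weight_set_def using i(1) by auto
  qed
qed

lemma commutator_generate_mixed_weight:
  assumes M: "M \<lhd> G" and N: "N \<lhd> G"
    and x: "x \<in> generate G (M \<union> N)" and y: "y \<in> generate G (mixed_weight_set G M N k)"
  shows "commutator G x y \<in> generate G (mixed_weight_set G M N (Suc k))"
proof -
  let ?W = "generate G (mixed_weight_set G M N (Suc k))"
  have W: "?W \<lhd> G" using mixed_weight_set_generate_normal[OF M N] .
  have MN: "M \<union> N \<subseteq> carrier G"
    using normal_subset_carrier[OF M] normal_subset_carrier[OF N] by blast
  have "commutator G x y' \<in> ?W" if y': "y' \<in> mixed_weight_set G M N k" for y'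
  proof (rule commutator_generate_left[OF W MN _ _ x])
    show "y' \<in> carrier G" using mixed_weight_set_subset[OF M] y' by blast
    show "commutator G x' y' \<in> ?W" if "x' \<in> M \<union> N" for x'
      using commutator_mem_mixed_weight_set[OF M N that y'] by (rule generate.incl)
  qed
  then show ?thesis
    using commutator_generate_right[OF W mixed_weight_set_subset[OF M] _ _ y]
      generate_in_carrier[OF MN x] by blast
qed

lemma lower_central_of_generate_Un_subset:
  assumes M: "M \<lhd> G" and N: "N \<lhd> G"
  shows "lower_central_of G (generate G (M \<union> N)) k
    \<subseteq> generate G (mixed_weight_set G M N (Suc k))"
proof (induction k)
  case 0
  have "M \<subseteq> lower_central_filtration G M 1 \<inter> lower_central_filtration G N (1 - 1)"
    "N \<subseteq> lower_central_filtration G M 0 \<inter> lower_central_filtration G N (1 - 0)"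
    using normal_subset_carrier[OF M] normal_subset_carrier[OF N] by auto
  then have "M \<union> N \<subseteq> mixed_weight_set G M N 1"
    unfolding mixed_weight_set_def by blast
  then show ?case by (simp add: mono_generate)
next
  case (Suc k)
  have "{commutator G x y |x y.
          x \<in> generate G (M \<union> N) \<and> y \<in> lower_central_of G (generate G (M \<union> N)) k}
      \<subseteq> generate G (mixed_weight_set G M N (Suc (Suc k)))"
    using commutator_generate_mixed_weight[OF M N] Suc by blast
  then show ?case
    using generate_subgroup_incl
      normal_imp_subgroup[OF mixed_weight_set_generate_normal[OF M N]]
    by (simp add: commutator_subgroup_eq)
qed

lemma mixed_weight_set_trivial:
  assumes M: "M \<lhd> G" and N: "N \<lhd> G"
    and c: "lower_central_of G M c = {\<one>}" and d: "lower_central_of G N d = {\<one>}"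
  shows "mixed_weight_set G M N (Suc (c + d)) \<subseteq> {\<one>}"
proof
  fix y assume "y \<in> mixed_weight_set G M N (Suc (c + d))"
  then obtain i where i: "i \<le> Suc (c + d)" "y \<in> lower_central_filtration G M i"
      "y \<in> lower_central_filtration G N (Suc (c + d) - i)"
    unfolding mixed_weight_set_def by blast
  show "y \<in> {\<one>}"
  proof (cases "c < i")
    case True
    then show ?thesis using lower_central_filtration_trivial[OF M c] i(2) by blast
  next
    case False
    then have "d < Suc (c + d) - i" by simp
    then show ?thesis using lower_central_filtration_trivial[OF N d] i(3) by blast
  qed
qed

lemma lower_central_of_generate_Un_trivial:
  assumes M: "M \<lhd> G" and N: "N \<lhd> G"
    and "lower_central_of G M c = {\<one>}" and "lower_central_of G N d = {\<one>}"
  shows "lower_central_of G (generate G (M \<union> N)) (c + d) = {\<one>}"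
proof -
  have "generate G (\<Union>{M, N}) \<lhd> G"
    by (rule normal_generate_Union) (use M N in auto)
  then have "\<one> \<in> lower_central_of G (generate G (M \<union> N)) (c + d)"
    using subgroup.one_closed[OF normal_imp_subgroup[OF lower_central_of_normal]] by simp
  moreover have "generate G (mixed_weight_set G M N (Suc (c + d))) \<subseteq> {\<one>}"
    using generate_subgroup_incl[OF mixed_weight_set_trivial[OF assms] triv_subgroup] .
  then have "lower_central_of G (generate G (M \<union> N)) (c + d) \<subseteq> {\<one>}"
    using lower_central_of_generate_Un_subset[OF M N] by blast
  ultimately show ?thesis by blast
qed

theorem nilpotent_group_generate_Un:
  assumes M: "M \<lhd> G" and N: "N \<lhd> G"
    and "nilpotent_group (G\<lparr>carrier := M\<rparr>)" and "nilpotent_group (G\<lparr>carrier := N\<rparr>)"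
  shows "nilpotent_group (G\<lparr>carrier := generate G (M \<union> N)\<rparr>)"
proof -
  have MN: "M \<union> N \<subseteq> carrier G"
    using normal_subset_carrier[OF M] normal_subset_carrier[OF N] by blast
  obtain c d where "lower_central_of G M c = {\<one>}" "lower_central_of G N d = {\<one>}"
    using assms(3,4) nilpotent_group_subgroup_iff[OF normal_imp_subgroup[OF M]]
      nilpotent_group_subgroup_iff[OF normal_imp_subgroup[OF N]] by blast
  then have "lower_central_of G (generate G (M \<union> N)) (c + d) = {\<one>}"
    by (rule lower_central_of_generate_Un_trivial[OF M N])
  then show ?thesis
    using nilpotent_group_subgroup_iff[OF generate_is_subgroup[OF MN]] by blast
qed

section \<open>Products of finitely many normal nilpotent subgroups\<close>

lemma generate_Un_generate:
  assumes "A \<subseteq> carrier G" "B \<subseteq> carrier G"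
  shows "generate G (A \<union> generate G B) = generate G (A \<union> B)"
proof
  have "generate G B \<subseteq> generate G (A \<union> B)" by (simp add: mono_generate)
  then have "A \<union> generate G B \<subseteq> generate G (A \<union> B)"
    using generate.incl[of _ "A \<union> B" G] by blast
  moreover have "subgroup (generate G (A \<union> B)) G"
    using assms by (intro generate_is_subgroup) blast
  ultimately show "generate G (A \<union> generate G B) \<subseteq> generate G (A \<union> B)"
    by (rule generate_subgroup_incl)
next
  show "generate G (A \<union> B) \<subseteq> generate G (A \<union> generate G B)"
    using generate.incl[of _ B G] by (intro mono_generate) blast
qed

lemma nilpotent_group_trivial: "nilpotent_group (G\<lparr>carrier := {\<one>}\<rparr>)"
  unfolding nilpotent_group_subgroup_iff[OF triv_subgroup] by (rule exI[of _ 0]) simp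

lemma nilpotent_group_generate_Union:
  assumes "finite \<H>" and "\<And>H. H \<in> \<H> \<Longrightarrow> H \<lhd> G"
    and "\<And>H. H \<in> \<H> \<Longrightarrow> nilpotent_group (G\<lparr>carrier := H\<rparr>)"
  shows "nilpotent_group (G\<lparr>carrier := generate G (\<Union>\<H>)\<rparr>)"
  using assms
proof (induction \<H> rule: finite_induct)
  case empty
  then show ?case by (simp add: generate_empty nilpotent_group_trivial)
next
  case (insert H \<H>)
  have H: "H \<lhd> G" and J: "generate G (\<Union>\<H>) \<lhd> G"
    using insert.prems(1) normal_generate_Union[of \<H>] by auto
  have "\<Union>\<H> \<subseteq> carrier G"
    using insert.prems(1) normal_subset_carrier by blast
  then have "generate G (H \<union> generate G (\<Union>\<H>)) = generate G (\<Union>(insert H \<H>))"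
    using generate_Un_generate[OF normal_subset_carrier[OF H]] by simp
  then show ?case
    using nilpotent_group_generate_Un[OF H J] insert by simp
qed

lemma normal_closure_normal:
  assumes "a \<in> carrier G"
  shows "normal_closure G a \<lhd> G"
  unfolding normal_closure_def
proof (rule normal_generateI)
  show "{g \<otimes> a \<otimes> inv g |g. g \<in> carrier G} \<subseteq> carrier G"
    using assms by auto
next
  fix h g
  assume "h \<in> {g \<otimes> a \<otimes> inv g |g. g \<in> carrier G}" and g: "g \<in> carrier G"
  then obtain k where k: "k \<in> carrier G" "h = k \<otimes> a \<otimes> inv k" by blast
  then have "g \<otimes> h \<otimes> inv g = (g \<otimes> k) \<otimes> a \<otimes> inv (g \<otimes> k)"
    using g assms by (simp add: group_normalize)
  then show "g \<otimes> h \<otimes> inv g \<in> {g \<otimes> a \<otimes> inv g |g. g \<in> carrier G}"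
    using g k by blast
qed

lemma mem_normal_closure: "a \<in> carrier G \<Longrightarrow> a \<in> normal_closure G a"
  unfolding normal_closure_def
proof (rule generate.incl)
  assume "a \<in> carrier G"
  then have "a = \<one> \<otimes> a \<otimes> inv \<one>" by simp
  then show "a \<in> {g \<otimes> a \<otimes> inv g |g. g \<in> carrier G}" by blast
qed

end

theorem mainTheorem10:
  fixes G :: "('a, 'b) monoid_scheme"
  assumes "group G"
    and "finitely_generated_group G"
    and "\<not> nilpotent_group G"
  shows "\<exists>a \<in> carrier G. \<not> nilpotent_group (G\<lparr>carrier := normal_closure G a\<rparr>)"
proof (rule ccontr)
  interpret group G by fact
  assume "\<not> ?thesis"
  then have nilpotent: "nilpotent_group (G\<lparr>carrier := normal_closure G a\<rparr>)" if "a \<in> carrier G" for a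
    using that by blast
  obtain S where S: "finite S" "S \<subseteq> carrier G" "generate G S = carrier G"
    using assms(2) unfolding finitely_generated_group_def by blast
  have "generate G (\<Union>(normal_closure G ` S)) = carrier G"
  proof
    show "generate G (\<Union>(normal_closure G ` S)) \<subseteq> carrier G"
      using S(2) normal_subset_carrier[OF normal_closure_normal] by (intro generate_incl) blast
    have "S \<subseteq> \<Union>(normal_closure G ` S)"
      using S(2) mem_normal_closure by blast
    then show "carrier G \<subseteq> generate G (\<Union>(normal_closure G ` S))"
      using mono_generate S(3) by blast
  qed
  moreover have "nilpotent_group (G\<lparr>carrier := generate G (\<Union>(normal_closure G ` S))\<rparr>)"
    using S normal_closure_normal nilpotent by (intro nilpotent_group_generate_Union) auto
  ultimately show False
    using assms(3) by simp
qed

end
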